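(* Let $A\in\mathbb{C}^{m\times n}$ have rank $r$, $B\in\mathbb{C}^{m\times n}$ have rank $s$, and $E=B-A$. Then $$\|B^{\dagger}-A^{\dagger}\|_{F}^{2}\geq\max\big\{\delta'_{1}+\|B^{\dagger}EA^{\dagger}\|_{F}^{2},\ \delta'_{2}+\|A^{\dagger}EB^{\dagger}\|_{F}^{2}\big\},$$ where $$\delta'_{1}:=\frac{\|E\|_{F}^{2}-\min\big\{\|B\|_{2}^{2}\|AA^{\dagger}EB^{\dagger}\|_{F}^{2},\|A\|_{2}^{2}\|A^{\dagger}EB^{\dagger}B\|_{F}^{2}\big\}}{\max\big\{\|A\|_{2}^{4},\|B\|_{2}^{4}\big\}},$$ $$\delta'_{2}:=\frac{\|E\|_{F}^{2}-\min\big\{\|A\|_{2}^{2}\|BB^{\dagger}EA^{\dagger}\|_{F}^{2},\|B\|_{2}^{2}\|B^{\dagger}EA^{\dagger}A\|_{F}^{2}\big\}}{\max\big\{\|A\|_{2}^{4},\|B\|_{2}^{4}\big\}}.$$ In particular, if $s=r$, then $$\|B^{\dagger}-A^{\dagger}\|_{F}^{2}\geq\max\big\{\varepsilon'_{1}+\|B^{\dagger}EA^{\dagger}\|_{F}^{2},\ \varepsilon'_{2}+\|A^{\dagger}EB^{\dagger}\|_{F}^{2}\big\},$$ where $$\varepsilon'_{1}:=\frac{\|E\|_{F}^{2}-\min\big\{\|A\|_{2}^{2}\|BB^{\dagger}EA^{\dagger}\|_{F}^{2},\|B\|_{2}^{2}\|B^{\dagger}EA^{\dagger}A\|_{F}^{2}\big\}}{\|A\|_{2}^{2}\|B\|_{2}^{2}},$$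 $$\varepsilon'_{2}:=\frac{\|E\|_{F}^{2}-\min\big\{\|B\|_{2}^{2}\|AA^{\dagger}EB^{\dagger}\|_{F}^{2},\|A\|_{2}^{2}\|A^{\dagger}EB^{\dagger}B\|_{F}^{2}\big\}}{\|A\|_{2}^{2}\|B\|_{2}^{2}}.$$
   Context: $M^{\dagger}$ denotes the Moore–Penrose inverse of $M$, $\|\cdot\|_{2}$ the spectral norm and $\|\cdot\|_{F}$ the Frobenius norm. *)

theory Defs
  imports "HOL-Analysis.Analysis"
begin

definition ctrans :: "complex^'n^'m \<Rightarrow> complex^'m^'n" where
  "ctrans A = (\<chi> i j. cnj (A $ j $ i))"

definition mp_inv :: "complex^'n^'m \<Rightarrow> complex^'m^'n" where
  "mp_inv A = (THE X. A ** X ** A = A \<and> X ** A ** X = X \<and>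
                      ctrans (A ** X) = A ** X \<and> ctrans (X ** A) = X ** A)"

definition frob_norm :: "complex^'n^'m \<Rightarrow> real" where
  "frob_norm A = sqrt (\<Sum>i\<in>UNIV. \<Sum>j\<in>UNIV. (cmod (A $ i $ j))\<^sup>2)"

definition spec_norm :: "complex^'n^'m \<Rightarrow> real" where
  "spec_norm A = onorm (\<lambda>x. A *v x)"

end

theory Submission
  imports Defs
begin

(*
  Let P = A A^+ and Q = B^+ B. Cutting B^+ - A^+ with Q on the left and P on the right gives
  three mutually orthogonal blocks, -B^+ E A^+, B^+ (I - P) and (I - Q) A^+, so the squared
  Frobenius norm of B^+ - A^+ is |B^+ E A^+|^2 plus the squared norms of the last two blocks.
  Cutting E in the same way, P E Q is bounded by the min term, while (I - P) E = (I - P) B and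
  E (I - Q) = -A (I - Q) are bounded by |B|^2 |B^+ (I - P)| and |A|^2 |(I - Q) A^+|, since
  B^H B B^+ = B^H and A^+ A A^H = A^H. This is the bound with delta'_1; exchanging A and B
  gives delta'_2.
  If rank A = rank B, the orthogonal projections A A^+, B B^+ (and A^+ A, B^+ B) have equal
  traces, and for such projections |P1 (I - P2)| = |(I - P1) P2|. Cutting E with B B^+ and
  A^+ A instead then bounds the two off-diagonal blocks by |A| |B| |B^+ (I - P)| and
  |A| |B| |(I - Q) A^+|.
*)

section \<open>Conjugate transpose and the complex inner product\<close>

lemma ctrans_nth [simp]: "ctrans A $ i $ j = cnj (A $ j $ i)"
  by (simp add: ctrans_def)

lemma ctrans_ctrans [simp]: "ctrans (ctrans A) = A"
  by (simp add: vec_eq_iff)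

lemma ctrans_matrix_mult: "ctrans (A ** B) = ctrans B ** ctrans A"
  by (simp add: vec_eq_iff matrix_matrix_mult_def mult.commute)

lemma ctrans_diff: "ctrans (A - B) = ctrans A - ctrans B"
  by (simp add: vec_eq_iff)

lemma ctrans_mat_1 [simp]: "ctrans (mat 1 :: complex^'n^'n) = mat 1"
  by (simp add: vec_eq_iff mat_def)

lemma matrix_diff_ldistrib: "A ** (B - C) = A ** B - A ** C"
  for A :: "'a::ring_1^'n^'m"
  by (simp add: vec_eq_iff matrix_matrix_mult_def algebra_simps sum_subtractf)

lemma matrix_diff_rdistrib: "(A - B) ** C = A ** C - B ** C"
  for A :: "'a::ring_1^'n^'m"
  by (simp add: vec_eq_iff matrix_matrix_mult_def algebra_simps sum_subtractf)

lemma matrix_mul_uminus_left: "(- A) ** B = - (A ** B)"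
  for A :: "'a::ring_1^'n^'m"
  by (simp add: vec_eq_iff matrix_matrix_mult_def sum_negf)

lemma matrix_mul_uminus_right: "A ** (- B) = - (A ** B)"
  for A :: "'a::ring_1^'n^'m"
  by (simp add: vec_eq_iff matrix_matrix_mult_def sum_negf)

definition cinner :: "complex^'n \<Rightarrow> complex^'n \<Rightarrow> complex" where
  "cinner x y = (\<Sum>i\<in>UNIV. x $ i * cnj (y $ i))"

lemma Re_cinner: "Re (cinner x y) = x \<bullet> y"
  by (simp add: cinner_def inner_vec_def inner_complex_def)

lemma cinner_matrix_vector_mult_left: "cinner (A *v x) y = cinner x (ctrans A *v y)"
  unfolding cinner_def matrix_vector_mult_def
  by (simp add: sum_distrib_left sum_distrib_right mult_ac) (rule sum.swap)

lemma cinner_diff_left: "cinner (x - y) z = cinner x z - cinner y z"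
  by (simp add: cinner_def algebra_simps sum_subtractf)

lemma cinner_scale_right: "cinner x (c *s y) = cnj c * cinner x y"
  by (simp add: cinner_def sum_distrib_left mult_ac)

lemma cinner_axis_left: "cinner (axis j 1) y = cnj (y $ j)"
  by (simp add: cinner_def axis_def if_distrib if_distribR cong: if_cong)

lemma cinner_self: "cinner x x = complex_of_real ((norm x)\<^sup>2)"
proof -
  have "cinner x x = (\<Sum>i\<in>UNIV. complex_of_real ((cmod (x $ i))\<^sup>2))"
    unfolding cinner_def by (rule sum.cong[OF refl]) (rule complex_norm_square[symmetric])
  also have "\<dots> = complex_of_real ((norm x)\<^sup>2)"
    by (simp add: norm_vec_def L2_set_def sum_nonneg)
  finally show ?thesis .
qed

section \<open>Existence and uniqueness of the Moore--Penrose inverse\<close>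

lemma ex_orthogonal_residual:
  fixes A :: "complex^'n^'m"
  shows "\<exists>w. \<forall>v. cinner (b - A *v w) (A *v v) = 0"
proof -
  let ?S = "range (\<lambda>x. A *v x)"
  have span_S: "span ?S = ?S"
    by (simp add: linear_subspace_image)
  obtain y z where y: "y \<in> span ?S" and z: "\<And>u. u \<in> span ?S \<Longrightarrow> orthogonal z u"
    and b: "b = y + z"
    using orthogonal_subspace_decomp_exists by blast
  from y span_S obtain w where w: "y = A *v w" by auto
  \<comment> \<open>Real orthogonality to the complex subspace range A, tested against both A v and
    A (i v), is complex orthogonality.\<close>
  have "cinner z (A *v v) = 0" for v
  proof -
    have "A *v (\<i> *s v) = \<i> *s (A *v v)"
      by (simp add: vec_eq_iff matrix_vector_mult_def sum_distrib_left mult_ac)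
    moreover have Re0: "Re (cinner z (A *v u)) = 0" for u
      using z[of "A *v u"] span_S by (simp add: Re_cinner orthogonal_def)
    ultimately show ?thesis
      using Re0[of v] Re0[of "\<i> *s v"] by (simp add: cinner_scale_right complex_eq_iff)
  qed
  then show ?thesis
    using b w by (intro exI[of _ w]) simp
qed

lemma ex_least_squares_inverse:
  fixes A :: "complex^'n^'m"
  obtains Y where "A ** Y ** A = A" and "ctrans (A ** Y) = A ** Y"
proof -
  have "\<forall>j. \<exists>w. \<forall>v. cinner (axis j 1 - A *v w) (A *v v) = 0"
    using ex_orthogonal_residual by blast
  then obtain w where w: "\<And>j v. cinner (axis j 1 - A *v w j) (A *v v) = 0"
    by metis
  \<comment> \<open>Column j of Y is a least-squares solution of A y = e_j.\<close>
  define Y where "Y = (\<chi> i j. w j $ i)"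
  define M where "M = A ** Y"
  have "Y *v axis j 1 = w j" for j
    by (simp add: Y_def vec_eq_iff matrix_vector_mult_def axis_def if_distrib if_distribR
        cong: if_cong)
  then have M_axis: "M *v axis j 1 = A *v w j" for j
    by (simp add: M_def matrix_vector_mul_assoc[symmetric])
  have "ctrans M *v (A *v v) = A *v v" for v
  proof -
    have "(ctrans M *v (A *v v)) $ j = cnj (cinner (A *v w j) (A *v v))" for j
      by (simp add: cinner_matrix_vector_mult_left cinner_axis_left flip: M_axis)
    moreover have "cinner (A *v w j) (A *v v) = cnj ((A *v v) $ j)" for j
      using w[of j v] by (simp add: cinner_diff_left cinner_axis_left)
    ultimately have "(ctrans M *v (A *v v)) $ j = (A *v v) $ j" for j
      by simp
    then show ?thesis by (simp add: vec_eq_iff)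
  qed
  then have MA: "ctrans M ** A = A"
    by (simp add: matrix_eq matrix_vector_mul_assoc[symmetric])
  then have "ctrans M ** M = M"
    by (simp add: M_def matrix_mul_assoc)
  then have "ctrans M = M"
    by (metis ctrans_ctrans ctrans_matrix_mult)
  with MA show ?thesis
    using that by (simp add: M_def matrix_mul_assoc)
qed

lemma ex_penrose_solution:
  fixes A :: "complex^'n^'m"
  shows "\<exists>X. A ** X ** A = A \<and> X ** A ** X = X \<and>
             ctrans (A ** X) = A ** X \<and> ctrans (X ** A) = X ** A"
proof -
  obtain Y where Y: "A ** Y ** A = A" "ctrans (A ** Y) = A ** Y"
    using ex_least_squares_inverse .
  obtain W where W: "ctrans A ** W ** ctrans A = ctrans A" "ctrans (ctrans A ** W) = ctrans A ** W"
    using ex_least_squares_inverse .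
  define Z where "Z = ctrans W"
  have ZA: "Z ** A = ctrans A ** W"
    using W(2) by (simp add: Z_def ctrans_matrix_mult)
  have AZA: "A ** Z ** A = A"
    using arg_cong[OF W(1), of ctrans] by (simp add: Z_def ctrans_matrix_mult matrix_mul_assoc)
  define X where "X = Z ** A ** Y"
  have AX: "A ** X = A ** Y"
    by (simp add: X_def matrix_mul_assoc AZA)
  have XA: "X ** A = Z ** A"
    using Y(1) by (metis X_def matrix_mul_assoc)
  have "X ** A ** X = X"
    using XA AZA by (metis X_def matrix_mul_assoc)
  with AX XA show ?thesis
    using Y W(2) ZA by (intro exI[of _ X]) simp
qed

lemma penrose_unique:
  fixes A :: "complex^'n^'m"
  assumes X: "A ** X ** A = A" "X ** A ** X = X" "ctrans (A ** X) = A ** X" "ctrans (X ** A) = X ** A"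
    and Y: "A ** Y ** A = A" "Y ** A ** Y = Y" "ctrans (A ** Y) = A ** Y" "ctrans (Y ** A) = Y ** A"
  shows "X = Y"
proof -
  have AY: "ctrans A ** A ** Y = ctrans A"
    using Y(1,3) by (metis ctrans_matrix_mult matrix_mul_assoc)
  have XA: "X ** A ** ctrans A = ctrans A"
    using X(1,4) by (metis ctrans_matrix_mult matrix_mul_assoc)
  have "X = X ** ctrans X ** ctrans A"
    using X(2,3) by (metis ctrans_matrix_mult matrix_mul_assoc)
  also have "\<dots> = X ** A ** Y"
    using X(2,3) AY by (metis ctrans_matrix_mult matrix_mul_assoc)
  also have "\<dots> = ctrans A ** ctrans Y ** Y"
    using Y(2,4) XA by (metis ctrans_matrix_mult matrix_mul_assoc)
  also have "\<dots> = Y"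
    using Y(2,4) by (metis ctrans_matrix_mult matrix_mul_assoc)
  finally show ?thesis .
qed

lemma mp_inv_penrose:
  fixes A :: "complex^'n^'m"
  shows "A ** mp_inv A ** A = A" and "mp_inv A ** A ** mp_inv A = mp_inv A"
    and "ctrans (A ** mp_inv A) = A ** mp_inv A" and "ctrans (mp_inv A ** A) = mp_inv A ** A"
proof -
  obtain X where X: "A ** X ** A = A \<and> X ** A ** X = X \<and>
      ctrans (A ** X) = A ** X \<and> ctrans (X ** A) = X ** A"
    using ex_penrose_solution by blast
  then have "mp_inv A = X"
    unfolding mp_inv_def by (blast intro: the_equality penrose_unique)
  with X show "A ** mp_inv A ** A = A" and "mp_inv A ** A ** mp_inv A = mp_inv A"
    and "ctrans (A ** mp_inv A) = A ** mp_inv A" and "ctrans (mp_inv A ** A) = mp_inv A ** A"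
    by auto
qed

lemma mp_inv_absorb:
  fixes A :: "complex^'n^'m"
  shows "A ** (mp_inv A ** A) = A" and "A ** (mp_inv A ** (A ** X)) = A ** X"
    and "mp_inv A ** (A ** mp_inv A) = mp_inv A"
    and "mp_inv A ** (A ** (mp_inv A ** Y)) = mp_inv A ** Y"
  by (metis matrix_mul_assoc mp_inv_penrose(1,2))+

lemma ctrans_mult_mp_inv_proj:
  fixes A :: "complex^'n^'m"
  shows "ctrans A ** A ** mp_inv A = ctrans A" and "mp_inv A ** A ** ctrans A = ctrans A"
proof -
  show "ctrans A ** A ** mp_inv A = ctrans A"
    by (metis ctrans_matrix_mult matrix_mul_assoc mp_inv_penrose(1,3))
  show "mp_inv A ** A ** ctrans A = ctrans A"
    by (metis ctrans_matrix_mult matrix_mul_assoc mp_inv_penrose(1,4))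
qed

section \<open>Frobenius and spectral norms\<close>

lemma frob_norm_nonneg: "frob_norm X \<ge> 0"
  by (simp add: frob_norm_def sum_nonneg)

lemma frob_norm_sq: "(frob_norm X)\<^sup>2 = (\<Sum>i\<in>UNIV. \<Sum>j\<in>UNIV. (cmod (X $ i $ j))\<^sup>2)"
  by (simp add: frob_norm_def sum_nonneg)

lemma frob_norm_sq_columns: "(frob_norm X)\<^sup>2 = (\<Sum>j\<in>UNIV. (norm (column j X))\<^sup>2)"
  by (simp add: frob_norm_sq norm_vec_def L2_set_def sum_nonneg column_def) (rule sum.swap)

lemma frob_norm_sq_trace: "(frob_norm X)\<^sup>2 = Re (trace (X ** ctrans X))"
  by (simp add: frob_norm_sq trace_def matrix_matrix_mult_def Re_sum complex_mult_cnj cmod_power2)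

lemma frob_norm_ctrans: "frob_norm (ctrans X) = frob_norm X"
  unfolding frob_norm_def by simp (rule sum.swap)

lemma frob_norm_uminus: "frob_norm (- X) = frob_norm X"
  by (simp add: frob_norm_def)

lemma column_matrix_mult: "column j (X ** Y) = X *v column j Y"
  by (simp add: column_def vec_eq_iff matrix_matrix_mult_def matrix_vector_mult_def)

lemma spec_norm_nonneg: "spec_norm A \<ge> 0"
  unfolding spec_norm_def by (simp add: onorm_pos_le)

lemma norm_matrix_vector_mult_le: "norm (A *v x) \<le> spec_norm A * norm x"
  unfolding spec_norm_def by (simp add: onorm)

lemma frob_norm_mult_le_left: "frob_norm (X ** Y) \<le> spec_norm X * frob_norm Y"
proof -
  have "(norm (X *v column j Y))\<^sup>2 \<le> (spec_norm X * norm (column j Y))\<^sup>2" for j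
    by (rule power_mono[OF norm_matrix_vector_mult_le norm_ge_zero])
  then have "(frob_norm (X ** Y))\<^sup>2 \<le> (\<Sum>j\<in>UNIV. (spec_norm X * norm (column j Y))\<^sup>2)"
    unfolding frob_norm_sq_columns[of "X ** Y"] column_matrix_mult by (rule sum_mono)
  also have "\<dots> = (spec_norm X * frob_norm Y)\<^sup>2"
    by (simp add: frob_norm_sq_columns power_mult_distrib sum_distrib_left)
  finally show ?thesis
    by (rule power2_le_imp_le) (simp add: spec_norm_nonneg frob_norm_nonneg)
qed

lemma spec_norm_ctrans_le: "spec_norm (ctrans A) \<le> spec_norm A"
  unfolding spec_norm_def[of "ctrans A"]
proof (rule onorm_le)
  fix x
  let ?y = "ctrans A *v x"
  have "(norm ?y)\<^sup>2 = Re (cinner ?y ?y)"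
    by (simp add: cinner_self)
  also have "\<dots> = x \<bullet> (A *v ?y)"
    by (simp add: cinner_matrix_vector_mult_left Re_cinner)
  also have "\<dots> \<le> norm x * norm (A *v ?y)"
    by (rule norm_cauchy_schwarz)
  also have "\<dots> \<le> norm x * (spec_norm A * norm ?y)"
    by (simp add: mult_left_mono norm_matrix_vector_mult_le)
  finally have "norm ?y * norm ?y \<le> (spec_norm A * norm x) * norm ?y"
    by (simp add: power2_eq_square mult_ac)
  then show "norm ?y \<le> spec_norm A * norm x"
    by (cases "norm ?y = 0") (simp_all add: spec_norm_nonneg)
qed

lemma frob_norm_mult_le_right: "frob_norm (X ** Y) \<le> frob_norm X * spec_norm Y"
proof -
  have "frob_norm (X ** Y) = frob_norm (ctrans Y ** ctrans X)"
    by (metis ctrans_matrix_mult frob_norm_ctrans)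
  also have "\<dots> \<le> spec_norm (ctrans Y) * frob_norm X"
    using frob_norm_mult_le_left[of "ctrans Y" "ctrans X"] by (simp add: frob_norm_ctrans)
  also have "\<dots> \<le> spec_norm Y * frob_norm X"
    by (simp add: mult_right_mono spec_norm_ctrans_le frob_norm_nonneg)
  finally show ?thesis
    by (simp add: mult.commute)
qed

section \<open>Orthogonal projections\<close>

definition orth_proj :: "complex^'n^'n \<Rightarrow> bool" where
  "orth_proj P \<longleftrightarrow> P ** P = P \<and> ctrans P = P"

lemma orth_proj_compl: "orth_proj P \<Longrightarrow> orth_proj (mat 1 - P)"
  unfolding orth_proj_def by (simp add: matrix_diff_ldistrib matrix_diff_rdistrib ctrans_diff)

lemma orth_proj_mp_inv:
  fixes A :: "complex^'n^'m"
  shows "orth_proj (A ** mp_inv A)" and "orth_proj (mp_inv A ** A)"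
  unfolding orth_proj_def by (metis matrix_mul_assoc mp_inv_penrose)+

lemma norm_sq_orth_proj_split:
  assumes "orth_proj P"
  shows "(norm v)\<^sup>2 = (norm (P *v v))\<^sup>2 + (norm ((mat 1 - P) *v v))\<^sup>2"
proof -
  have PP: "P ** P = P" and cP: "ctrans P = P"
    using assms by (auto simp: orth_proj_def)
  have "P *v (v - P *v v) = 0"
    using PP by (simp add: matrix_vector_mult_diff_distrib matrix_vector_mul_assoc)
  then have "cinner (P *v v) (v - P *v v) = 0"
    using cP cinner_matrix_vector_mult_left[of P v "v - P *v v"] by (simp add: cinner_def)
  then have "orthogonal (P *v v) (v - P *v v)"
    by (simp add: orthogonal_def flip: Re_cinner)
  then have "(norm (P *v v + (v - P *v v)))\<^sup>2 = (norm (P *v v))\<^sup>2 + (norm (v - P *v v))\<^sup>2"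
    by (rule norm_add_Pythagorean)
  then show ?thesis
    by (simp add: matrix_vector_mult_diff_rdistrib)
qed

lemma frob_norm_sq_orth_proj_left:
  assumes "orth_proj P"
  shows "(frob_norm X)\<^sup>2 = (frob_norm (P ** X))\<^sup>2 + (frob_norm ((mat 1 - P) ** X))\<^sup>2"
proof -
  have "(frob_norm X)\<^sup>2
      = (\<Sum>j\<in>UNIV. (norm (P *v column j X))\<^sup>2 + (norm ((mat 1 - P) *v column j X))\<^sup>2)"
    unfolding frob_norm_sq_columns by (rule sum.cong[OF refl norm_sq_orth_proj_split[OF assms]])
  then show ?thesis
    by (simp only: frob_norm_sq_columns column_matrix_mult sum.distrib)
qed

lemma frob_norm_sq_orth_proj_right:
  assumes "orth_proj P"
  shows "(frob_norm X)\<^sup>2 = (frob_norm (X ** P))\<^sup>2 + (frob_norm (X ** (mat 1 - P)))\<^sup>2"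
proof -
  have flip: "frob_norm (X ** R) = frob_norm (R ** ctrans X)" if "orth_proj R" for R
    using that unfolding orth_proj_def by (metis ctrans_matrix_mult frob_norm_ctrans)
  have "frob_norm (X ** P) = frob_norm (P ** ctrans X)"
    and "frob_norm (X ** (mat 1 - P)) = frob_norm ((mat 1 - P) ** ctrans X)"
    by (simp_all add: assms orth_proj_compl flip)
  with frob_norm_sq_orth_proj_left[OF assms, of "ctrans X"] show ?thesis
    by (simp only: frob_norm_ctrans)
qed

lemma frob_norm_orth_proj_mult_le:
  assumes "orth_proj P"
  shows "frob_norm (P ** X) \<le> frob_norm X"
proof (rule power2_le_imp_le)
  show "(frob_norm (P ** X))\<^sup>2 \<le> (frob_norm X)\<^sup>2"
    using frob_norm_sq_orth_proj_left[OF assms, of X] zero_le_power2[of "frob_norm ((mat 1 - P) ** X)"]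
    by linarith
qed (rule frob_norm_nonneg)

lemma frob_norm_sq_orth_proj_split3:
  assumes "orth_proj P" and "orth_proj Q"
  shows "(frob_norm X)\<^sup>2 = (frob_norm (P ** X ** Q))\<^sup>2 + (frob_norm (P ** X ** (mat 1 - Q)))\<^sup>2
      + (frob_norm ((mat 1 - P) ** X))\<^sup>2"
  using frob_norm_sq_orth_proj_left[OF assms(1), of X]
    frob_norm_sq_orth_proj_right[OF assms(2), of "P ** X"]
  by linarith

section \<open>Trace and rank of idempotents\<close>

lemma vector_matrix_mult_eq_sum_rows: "x v* A = (\<Sum>i\<in>UNIV. x $ i *s row i A)"
  by (simp add: vec_eq_iff vector_matrix_mult_def row_def sum_component mult.commute)

lemma vector_matrix_mult_in_span_rows: "x v* A \<in> vec.span (rows A)"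
  unfolding vector_matrix_mult_eq_sum_rows
  by (intro vec.span_sum vec.span_scale vec.span_base) (auto simp: rows_def)

lemma row_matrix_mult: "row i (X ** Y) = row i X v* Y"
  by (simp add: vec_eq_iff row_def matrix_matrix_mult_def vector_matrix_mult_def mult.commute)

lemma rank_mul_le_right_field:
  fixes A :: "'a::field^'n^'m" and B :: "'a^'p^'n"
  shows "rank (A ** B) \<le> rank B"
  unfolding row_rank_def_gen
proof (rule vec.dim_mono, rule subsetI)
  fix r
  assume "r \<in> rows (A ** B)"
  then obtain i where "r = row i (A ** B)"
    by (auto simp: rows_def)
  then show "r \<in> vec.span (rows B)"
    by (simp add: row_matrix_mult vector_matrix_mult_in_span_rows)
qed

lemma idempotent_fixes_row_space:
  fixes P :: "'a::field^'n^'n"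
  assumes "P ** P = P" and "y \<in> vec.span (rows P)"
  shows "y v* P = y"
proof -
  have "vec.subspace {y. y v* P = y}"
    by (simp add: vec.subspace_def vector_matrix_left_distrib scalar_vector_matrix_assoc)
  moreover have "rows P \<subseteq> {y. y v* P = y}"
    using assms(1) by (auto simp: rows_def simp flip: row_matrix_mult)
  ultimately show ?thesis
    using assms(2) vec.span_minimal by blast
qed

lemma trace_idempotent:
  fixes P :: "'a::field^'n^'n"
  assumes idem: "P ** P = P"
  shows "trace P = of_nat (rank P)"
proof -
  let ?V = "vec.span (rows P)"
  obtain Bs where Bs: "Bs \<subseteq> ?V" "vec.independent Bs" "?V \<subseteq> vec.span Bs" "card Bs = vec.dim ?V"
    by (rule vec.basis_exists)
  have fin: "finite Bs"
    using Bs(2) by (rule vec.finiteI_independent)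
  let ?r = "vec.representation Bs"
  have row_in_span: "row i P \<in> vec.span Bs" for i
    using Bs(3) by (auto simp: rows_def intro: vec.span_base)
  \<comment> \<open>Expanding every row in the basis Bs of the row space, the trace becomes the sum over
    b \<in> Bs of the b-coordinate of b v* P = b.\<close>
  have "trace P = (\<Sum>i\<in>UNIV. \<Sum>b\<in>Bs. ?r (row i P) b * b $ i)"
    unfolding trace_def
  proof (rule sum.cong[OF refl])
    fix i
    have "P $ i $ i = (\<Sum>b\<in>Bs. ?r (row i P) b *s b) $ i"
      using vec.sum_representation_eq[OF Bs(2) row_in_span fin order.refl]
      by (simp add: row_def)
    then show "P $ i $ i = (\<Sum>b\<in>Bs. ?r (row i P) b * b $ i)"
      by (simp add: sum_component)
  qed
  also have "\<dots> = (\<Sum>b\<in>Bs. ?r (b v* P) b)"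
  proof (subst sum.swap, rule sum.cong[OF refl])
    fix b
    have "?r (b v* P) = (\<lambda>c. \<Sum>i\<in>UNIV. ?r (b $ i *s row i P) c)"
      unfolding vector_matrix_mult_eq_sum_rows
      by (rule vec.representation_sum[OF Bs(2)]) (intro vec.span_scale row_in_span)
    then show "(\<Sum>i\<in>UNIV. ?r (row i P) b * b $ i) = ?r (b v* P) b"
      by (simp add: vec.representation_scale[OF Bs(2) row_in_span] mult.commute)
  qed
  also have "\<dots> = (\<Sum>b\<in>Bs. 1)"
  proof (rule sum.cong[OF refl])
    fix b
    assume b: "b \<in> Bs"
    then have "b v* P = b"
      using Bs(1) idem idempotent_fixes_row_space by blast
    then show "?r (b v* P) b = 1"
      using vec.representation_basis[OF Bs(2) b] by simp
  qed
  also have "\<dots> = of_nat (rank P)"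
    by (simp add: row_rank_def_gen Bs(4))
  finally show ?thesis .
qed

lemma rank_mp_inv_mult:
  fixes A :: "complex^'n^'m"
  shows "rank (mp_inv A ** A) = rank A"
proof (rule antisym)
  have "rank A = rank (A ** (mp_inv A ** A))"
    by (simp add: mp_inv_absorb)
  also have "\<dots> \<le> rank (mp_inv A ** A)"
    by (rule rank_mul_le_right_field)
  finally show "rank A \<le> rank (mp_inv A ** A)" .
qed (rule rank_mul_le_right_field)

lemma trace_mp_inv_proj:
  fixes A :: "complex^'n^'m"
  shows "trace (mp_inv A ** A) = of_nat (rank A)" and "trace (A ** mp_inv A) = of_nat (rank A)"
proof -
  have "mp_inv A ** A ** (mp_inv A ** A) = mp_inv A ** A"
    using orth_proj_mp_inv(2)[of A] by (simp only: orth_proj_def)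
  then show "trace (mp_inv A ** A) = of_nat (rank A)"
    by (simp add: trace_idempotent rank_mp_inv_mult)
  \<comment> \<open>Instantiated: with factors of different shapes, simp would loop on trace_mul_sym.\<close>
  then show "trace (A ** mp_inv A) = of_nat (rank A)"
    by (simp add: trace_mul_sym[of A])
qed

lemma frob_norm_orth_proj_compl_commute:
  fixes P Q :: "complex^'n^'n"
  assumes P: "orth_proj P" and Q: "orth_proj Q" and tr: "trace P = trace Q"
  shows "frob_norm (P ** (mat 1 - Q)) = frob_norm ((mat 1 - P) ** Q)"
proof -
  have PP: "P ** P = P" and cP: "ctrans P = P" and QQ: "Q ** Q = Q" and cQ: "ctrans Q = Q"
    using P Q by (auto simp: orth_proj_def)
  have PP': "Y ** P ** P = Y ** P" and QQ': "Y ** Q ** Q = Y ** Q" for Y :: "complex^'n^'k"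
    by (simp_all add: PP QQ flip: matrix_mul_assoc)
  \<comment> \<open>The two squared norms are trace P - trace (P Q) and trace Q - trace (Q P).\<close>
  have "P ** (mat 1 - Q) ** ctrans (P ** (mat 1 - Q)) = P - P ** Q ** P"
    by (simp add: ctrans_matrix_mult ctrans_diff cP cQ matrix_diff_ldistrib matrix_diff_rdistrib
        matrix_mul_assoc PP QQ PP' QQ')
  moreover have "(mat 1 - P) ** Q ** ctrans ((mat 1 - P) ** Q) = Q - P ** Q - Q ** P + P ** Q ** P"
    by (simp add: ctrans_matrix_mult ctrans_diff cP cQ matrix_diff_ldistrib matrix_diff_rdistrib
        matrix_mul_assoc PP QQ PP' QQ')
  moreover have "trace (P ** Q ** P) = trace (Q ** P)"
    using trace_mul_sym[of P "Q ** P"] by (simp add: matrix_mul_assoc PP')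
  ultimately have "(frob_norm (P ** (mat 1 - Q)))\<^sup>2 = (frob_norm ((mat 1 - P) ** Q))\<^sup>2"
    unfolding frob_norm_sq_trace
    by (simp add: trace_sub trace_add trace_mul_sym[of P Q] tr)
  then show ?thesis
    by (simp add: frob_norm_nonneg power2_eq_iff_nonneg)
qed

section \<open>The perturbation bounds\<close>

lemma frob_norm_hermitian_mult_le:
  fixes B :: "complex^'n^'m"
  assumes "ctrans P = P"
  shows "frob_norm (P ** B) \<le> (spec_norm B)\<^sup>2 * frob_norm (mp_inv B ** P)"
proof -
  have "P ** B = ctrans (ctrans B ** (B ** (mp_inv B ** P)))"
    using assms by (simp add: matrix_mul_assoc ctrans_mult_mp_inv_proj ctrans_matrix_mult)
  then have "frob_norm (P ** B) \<le> spec_norm (ctrans B) * frob_norm (B ** (mp_inv B ** P))"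
    by (simp add: frob_norm_ctrans frob_norm_mult_le_left)
  also have "\<dots> \<le> spec_norm B * (spec_norm B * frob_norm (mp_inv B ** P))"
    by (intro mult_mono spec_norm_ctrans_le frob_norm_mult_le_left)
      (simp_all add: spec_norm_nonneg frob_norm_nonneg)
  finally show ?thesis
    by (simp add: power2_eq_square mult_ac)
qed

lemma frob_norm_mult_hermitian_le:
  fixes A :: "complex^'n^'m"
  assumes "ctrans P = P"
  shows "frob_norm (A ** P) \<le> (spec_norm A)\<^sup>2 * frob_norm (P ** mp_inv A)"
proof -
  have "P ** mp_inv A ** A ** ctrans A = P ** ctrans A"
    by (metis ctrans_mult_mp_inv_proj(2) matrix_mul_assoc)
  then have "A ** P = ctrans ((P ** mp_inv A) ** A ** ctrans A)"
    using assms by (simp add: ctrans_matrix_mult)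
  then have "frob_norm (A ** P) \<le> frob_norm ((P ** mp_inv A) ** A) * spec_norm (ctrans A)"
    by (simp add: frob_norm_ctrans frob_norm_mult_le_right)
  also have "\<dots> \<le> (frob_norm (P ** mp_inv A) * spec_norm A) * spec_norm A"
    by (intro mult_mono spec_norm_ctrans_le frob_norm_mult_le_right)
      (simp_all add: spec_norm_nonneg frob_norm_nonneg)
  finally show ?thesis
    by (simp add: power2_eq_square mult_ac)
qed

lemma frob_norm_sq_mp_inv_diff:
  fixes A B :: "complex^'n^'m"
  shows "(frob_norm (mp_inv B - mp_inv A))\<^sup>2 =
     (frob_norm (mp_inv B ** (B - A) ** mp_inv A))\<^sup>2
     + (frob_norm (mp_inv B ** (mat 1 - A ** mp_inv A)))\<^sup>2
     + (frob_norm ((mat 1 - mp_inv B ** B) ** mp_inv A))\<^sup>2"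
proof -
  let ?X = "mp_inv B - mp_inv A" and ?P = "mp_inv B ** B" and ?Q = "A ** mp_inv A"
  have "?P ** ?X ** ?Q = - (mp_inv B ** (B - A) ** mp_inv A)"
    and "?P ** ?X ** (mat 1 - ?Q) = mp_inv B ** (mat 1 - ?Q)"
    and "(mat 1 - ?P) ** ?X = - ((mat 1 - ?P) ** mp_inv A)"
    by (simp_all add: matrix_diff_ldistrib matrix_diff_rdistrib mp_inv_absorb
        flip: matrix_mul_assoc)
  then show ?thesis
    using frob_norm_sq_orth_proj_split3[OF orth_proj_mp_inv(2)[of B] orth_proj_mp_inv(1)[of A], of ?X]
    by (simp add: frob_norm_uminus)
qed

lemma power2_le_mult_power2: "0 \<le> x \<Longrightarrow> x \<le> c * y \<Longrightarrow> x\<^sup>2 \<le> c\<^sup>2 * (y::real)\<^sup>2"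
  by (metis power_mono power_mult_distrib)

lemma frob_norm_sq_proj_sandwich_le:
  fixes X :: "complex^'k^'m" and M :: "complex^'n^'m" and Y :: "complex^'n^'p"
  shows "(frob_norm (X ** mp_inv X ** M ** (mp_inv Y ** Y)))\<^sup>2 \<le>
      min ((spec_norm Y)\<^sup>2 * (frob_norm (X ** mp_inv X ** M ** mp_inv Y))\<^sup>2)
          ((spec_norm X)\<^sup>2 * (frob_norm (mp_inv X ** M ** mp_inv Y ** Y))\<^sup>2)"
proof -
  let ?S = "X ** mp_inv X ** M ** (mp_inv Y ** Y)"
  have via_Y: "frob_norm ?S \<le> spec_norm Y * frob_norm (X ** mp_inv X ** M ** mp_inv Y)"
    using frob_norm_mult_le_right[of "X ** mp_inv X ** M ** mp_inv Y" Y]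
    by (simp add: matrix_mul_assoc mult.commute)
  have via_X: "frob_norm ?S \<le> spec_norm X * frob_norm (mp_inv X ** M ** mp_inv Y ** Y)"
    using frob_norm_mult_le_left[of X "mp_inv X ** M ** mp_inv Y ** Y"] by (simp add: matrix_mul_assoc)
  show ?thesis
    using power2_le_mult_power2[OF frob_norm_nonneg via_Y]
      power2_le_mult_power2[OF frob_norm_nonneg via_X]
    by simp
qed

lemma frob_norm_compl_proj_diff_le:
  fixes A B :: "complex^'n^'m"
  shows "frob_norm ((mat 1 - A ** mp_inv A) ** (B - A))
      \<le> (spec_norm B)\<^sup>2 * frob_norm (mp_inv B ** (mat 1 - A ** mp_inv A))"
proof -
  have "(mat 1 - A ** mp_inv A) ** (B - A) = (mat 1 - A ** mp_inv A) ** B"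
    by (simp add: matrix_diff_ldistrib matrix_diff_rdistrib mp_inv_absorb flip: matrix_mul_assoc)
  then show ?thesis
    using frob_norm_hermitian_mult_le[of "mat 1 - A ** mp_inv A" B] orth_proj_compl[OF orth_proj_mp_inv(1)[of A]]
    by (simp add: orth_proj_def)
qed

lemma frob_norm_diff_compl_proj_le:
  fixes A B :: "complex^'n^'m"
  shows "frob_norm ((B - A) ** (mat 1 - mp_inv B ** B))
      \<le> (spec_norm A)\<^sup>2 * frob_norm ((mat 1 - mp_inv B ** B) ** mp_inv A)"
proof -
  have "(B - A) ** (mat 1 - mp_inv B ** B) = - (A ** (mat 1 - mp_inv B ** B))"
    by (simp add: matrix_diff_ldistrib matrix_diff_rdistrib mp_inv_absorb flip: matrix_mul_assoc)
  then show ?thesis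
    using frob_norm_mult_hermitian_le[of "mat 1 - mp_inv B ** B" A] orth_proj_compl[OF orth_proj_mp_inv(2)[of B]]
    by (simp add: orth_proj_def frob_norm_uminus)
qed

lemma frob_norm_sq_diff_le:
  fixes A B :: "complex^'n^'m"
  shows "(frob_norm (B - A))\<^sup>2 \<le>
      min ((spec_norm B)\<^sup>2 * (frob_norm (A ** mp_inv A ** (B - A) ** mp_inv B))\<^sup>2)
          ((spec_norm A)\<^sup>2 * (frob_norm (mp_inv A ** (B - A) ** mp_inv B ** B))\<^sup>2)
      + (spec_norm B)^4 * (frob_norm (mp_inv B ** (mat 1 - A ** mp_inv A)))\<^sup>2
      + (spec_norm A)^4 * (frob_norm ((mat 1 - mp_inv B ** B) ** mp_inv A))\<^sup>2"
proof -
  let ?E = "B - A" and ?P = "A ** mp_inv A" and ?Q = "mp_inv B ** B"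
  have P: "orth_proj ?P" and Q: "orth_proj ?Q"
    by (rule orth_proj_mp_inv)+
  from power2_le_mult_power2[OF frob_norm_nonneg frob_norm_compl_proj_diff_le]
  have compl_P: "(frob_norm ((mat 1 - ?P) ** ?E))\<^sup>2
      \<le> (spec_norm B)^4 * (frob_norm (mp_inv B ** (mat 1 - ?P)))\<^sup>2"
    by (simp flip: power_mult)
  have "frob_norm (?P ** ?E ** (mat 1 - ?Q)) \<le> frob_norm (?E ** (mat 1 - ?Q))"
    by (metis frob_norm_orth_proj_mult_le[OF P] matrix_mul_assoc)
  from power2_le_mult_power2[OF frob_norm_nonneg order_trans[OF this frob_norm_diff_compl_proj_le]]
  have compl_Q: "(frob_norm (?P ** ?E ** (mat 1 - ?Q)))\<^sup>2
      \<le> (spec_norm A)^4 * (frob_norm ((mat 1 - ?Q) ** mp_inv A))\<^sup>2"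
    by (simp flip: power_mult)
  show ?thesis
    using frob_norm_sq_orth_proj_split3[OF P Q, of ?E] frob_norm_sq_proj_sandwich_le[of A ?E B]
      compl_P compl_Q
    by linarith
qed

lemma frob_norm_compl_proj_diff_le_equal_rank:
  fixes A B :: "complex^'n^'m"
  assumes "rank B = rank A"
  shows "frob_norm ((mat 1 - B ** mp_inv B) ** (B - A))
      \<le> spec_norm A * spec_norm B * frob_norm (mp_inv B ** (mat 1 - A ** mp_inv A))"
proof -
  let ?P = "B ** mp_inv B"
  have "(mat 1 - ?P) ** (B - A) = - ((mat 1 - ?P) ** (A ** mp_inv A) ** A)"
    by (simp add: matrix_diff_ldistrib matrix_diff_rdistrib mp_inv_absorb flip: matrix_mul_assoc)
  then have "frob_norm ((mat 1 - ?P) ** (B - A))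
      \<le> frob_norm ((mat 1 - ?P) ** (A ** mp_inv A)) * spec_norm A"
    by (simp add: frob_norm_uminus frob_norm_mult_le_right)
  also have "frob_norm ((mat 1 - ?P) ** (A ** mp_inv A)) = frob_norm (B ** (mp_inv B ** (mat 1 - A ** mp_inv A)))"
    using frob_norm_orth_proj_compl_commute[OF orth_proj_mp_inv(1)[of B] orth_proj_mp_inv(1)[of A]] assms
    by (simp add: trace_mp_inv_proj matrix_mul_assoc)
  also have "\<dots> * spec_norm A \<le> (spec_norm B * frob_norm (mp_inv B ** (mat 1 - A ** mp_inv A))) * spec_norm A"
    by (simp add: frob_norm_mult_le_left mult_right_mono spec_norm_nonneg)
  finally show ?thesis
    by (simp add: mult_ac)
qed

lemma frob_norm_proj_diff_compl_le_equal_rank: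
  fixes A B :: "complex^'n^'m"
  assumes "rank B = rank A"
  shows "frob_norm (B ** mp_inv B ** (B - A) ** (mat 1 - mp_inv A ** A))
      \<le> spec_norm A * spec_norm B * frob_norm ((mat 1 - mp_inv B ** B) ** mp_inv A)"
proof -
  let ?Q = "mp_inv A ** A"
  have "B ** mp_inv B ** (B - A) ** (mat 1 - ?Q) = B ** ((mp_inv B ** B) ** (mat 1 - ?Q))"
    by (simp add: matrix_diff_ldistrib matrix_diff_rdistrib mp_inv_absorb flip: matrix_mul_assoc)
  then have "frob_norm (B ** mp_inv B ** (B - A) ** (mat 1 - ?Q))
      \<le> spec_norm B * frob_norm ((mp_inv B ** B) ** (mat 1 - ?Q))"
    by (simp add: frob_norm_mult_le_left)
  also have "frob_norm ((mp_inv B ** B) ** (mat 1 - ?Q)) = frob_norm ((mat 1 - mp_inv B ** B) ** mp_inv A ** A)"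
    using frob_norm_orth_proj_compl_commute[OF orth_proj_mp_inv(2)[of B] orth_proj_mp_inv(2)[of A]] assms
    by (simp add: trace_mp_inv_proj matrix_mul_assoc)
  also have "spec_norm B * \<dots> \<le> spec_norm B * (frob_norm ((mat 1 - mp_inv B ** B) ** mp_inv A) * spec_norm A)"
    by (simp add: frob_norm_mult_le_right mult_left_mono spec_norm_nonneg)
  finally show ?thesis
    by (simp add: mult_ac)
qed

lemma frob_norm_sq_diff_le_equal_rank:
  fixes A B :: "complex^'n^'m"
  assumes "rank B = rank A"
  shows "(frob_norm (B - A))\<^sup>2 \<le>
      min ((spec_norm A)\<^sup>2 * (frob_norm (B ** mp_inv B ** (B - A) ** mp_inv A))\<^sup>2)
          ((spec_norm B)\<^sup>2 * (frob_norm (mp_inv B ** (B - A) ** mp_inv A ** A))\<^sup>2)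
      + (spec_norm A)\<^sup>2 * (spec_norm B)\<^sup>2 *
        ((frob_norm (mp_inv B ** (mat 1 - A ** mp_inv A)))\<^sup>2
         + (frob_norm ((mat 1 - mp_inv B ** B) ** mp_inv A))\<^sup>2)"
proof -
  let ?E = "B - A" and ?P = "B ** mp_inv B" and ?Q = "mp_inv A ** A"
  let ?c = "(spec_norm A)\<^sup>2 * (spec_norm B)\<^sup>2"
  let ?t2 = "(frob_norm (mp_inv B ** (mat 1 - A ** mp_inv A)))\<^sup>2"
  let ?t3 = "(frob_norm ((mat 1 - mp_inv B ** B) ** mp_inv A))\<^sup>2"
  have P: "orth_proj ?P" and Q: "orth_proj ?Q"
    by (rule orth_proj_mp_inv)+
  from power2_le_mult_power2[OF frob_norm_nonneg frob_norm_compl_proj_diff_le_equal_rank[OF assms]]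
  have "(frob_norm ((mat 1 - ?P) ** ?E))\<^sup>2 \<le> ?c * ?t2"
    by (simp add: power_mult_distrib)
  moreover
  from power2_le_mult_power2[OF frob_norm_nonneg frob_norm_proj_diff_compl_le_equal_rank[OF assms]]
  have "(frob_norm (?P ** ?E ** (mat 1 - ?Q)))\<^sup>2 \<le> ?c * ?t3"
    by (simp add: power_mult_distrib)
  moreover have "?c * (?t2 + ?t3) = ?c * ?t2 + ?c * ?t3"
    by (rule distrib_left)
  ultimately show ?thesis
    using frob_norm_sq_orth_proj_split3[OF P Q, of ?E] frob_norm_sq_proj_sandwich_le[of B ?E A]
    by linarith
qed

lemma divide_le_if_le_mult: "0 \<le> c \<Longrightarrow> 0 \<le> y \<Longrightarrow> x \<le> c * y \<Longrightarrow> x / c \<le> (y::real)"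
  by (cases "c = 0") (auto simp: divide_le_eq mult.commute)

lemma mp_inv_diff_lower_bound:
  fixes A B :: "complex^'n^'m"
  shows "((frob_norm (B - A))\<^sup>2
        - min ((spec_norm B)\<^sup>2 * (frob_norm (A ** mp_inv A ** (B - A) ** mp_inv B))\<^sup>2)
              ((spec_norm A)\<^sup>2 * (frob_norm (mp_inv A ** (B - A) ** mp_inv B ** B))\<^sup>2))
       / max ((spec_norm A)^4) ((spec_norm B)^4)
      + (frob_norm (mp_inv B ** (B - A) ** mp_inv A))\<^sup>2
      \<le> (frob_norm (mp_inv B - mp_inv A))\<^sup>2"
proof -
  let ?M = "max ((spec_norm A)^4) ((spec_norm B)^4)"
  let ?t2 = "(frob_norm (mp_inv B ** (mat 1 - A ** mp_inv A)))\<^sup>2"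
  let ?t3 = "(frob_norm ((mat 1 - mp_inv B ** B) ** mp_inv A))\<^sup>2"
  have "(spec_norm B)^4 * ?t2 + (spec_norm A)^4 * ?t3 \<le> ?M * (?t2 + ?t3)"
    by (simp add: distrib_left add_mono mult_right_mono)
  with frob_norm_sq_diff_le[of B A] have "((frob_norm (B - A))\<^sup>2
        - min ((spec_norm B)\<^sup>2 * (frob_norm (A ** mp_inv A ** (B - A) ** mp_inv B))\<^sup>2)
              ((spec_norm A)\<^sup>2 * (frob_norm (mp_inv A ** (B - A) ** mp_inv B ** B))\<^sup>2))
       / ?M \<le> ?t2 + ?t3"
    by (intro divide_le_if_le_mult) (simp_all add: le_max_iff_disj)
  then show ?thesis
    using frob_norm_sq_mp_inv_diff[of B A] by linarith
qed

lemma mp_inv_diff_lower_bound_equal_rank: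
  fixes A B :: "complex^'n^'m"
  assumes "rank B = rank A"
  shows "((frob_norm (B - A))\<^sup>2
        - min ((spec_norm A)\<^sup>2 * (frob_norm (B ** mp_inv B ** (B - A) ** mp_inv A))\<^sup>2)
              ((spec_norm B)\<^sup>2 * (frob_norm (mp_inv B ** (B - A) ** mp_inv A ** A))\<^sup>2))
       / ((spec_norm A)\<^sup>2 * (spec_norm B)\<^sup>2)
      + (frob_norm (mp_inv B ** (B - A) ** mp_inv A))\<^sup>2
      \<le> (frob_norm (mp_inv B - mp_inv A))\<^sup>2"
proof -
  have "((frob_norm (B - A))\<^sup>2
        - min ((spec_norm A)\<^sup>2 * (frob_norm (B ** mp_inv B ** (B - A) ** mp_inv A))\<^sup>2)
              ((spec_norm B)\<^sup>2 * (frob_norm (mp_inv B ** (B - A) ** mp_inv A ** A))\<^sup>2))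
       / ((spec_norm A)\<^sup>2 * (spec_norm B)\<^sup>2)
      \<le> (frob_norm (mp_inv B ** (mat 1 - A ** mp_inv A)))\<^sup>2
        + (frob_norm ((mat 1 - mp_inv B ** B) ** mp_inv A))\<^sup>2"
    using frob_norm_sq_diff_le_equal_rank[OF assms] by (intro divide_le_if_le_mult) simp_all
  then show ?thesis
    using frob_norm_sq_mp_inv_diff[of B A] by linarith
qed

theorem theorem3p9:
  fixes A B :: "complex^'n^'m"
  defines "E \<equiv> B - A"
  shows "(frob_norm (mp_inv B - mp_inv A))\<^sup>2 \<ge>
           max (((frob_norm E)\<^sup>2
                  - min ((spec_norm B)\<^sup>2 * (frob_norm (A ** mp_inv A ** E ** mp_inv B))\<^sup>2)
                        ((spec_norm A)\<^sup>2 * (frob_norm (mp_inv A ** E ** mp_inv B ** B))\<^sup>2))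
                 / max ((spec_norm A)^4) ((spec_norm B)^4)
                 + (frob_norm (mp_inv B ** E ** mp_inv A))\<^sup>2)
               (((frob_norm E)\<^sup>2
                  - min ((spec_norm A)\<^sup>2 * (frob_norm (B ** mp_inv B ** E ** mp_inv A))\<^sup>2)
                        ((spec_norm B)\<^sup>2 * (frob_norm (mp_inv B ** E ** mp_inv A ** A))\<^sup>2))
                 / max ((spec_norm A)^4) ((spec_norm B)^4)
                 + (frob_norm (mp_inv A ** E ** mp_inv B))\<^sup>2)
       \<and> (rank B = rank A \<longrightarrow>
          (frob_norm (mp_inv B - mp_inv A))\<^sup>2 \<ge>
           max (((frob_norm E)\<^sup>2
                  - min ((spec_norm A)\<^sup>2 * (frob_norm (B ** mp_inv B ** E ** mp_inv A))\<^sup>2)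
                        ((spec_norm B)\<^sup>2 * (frob_norm (mp_inv B ** E ** mp_inv A ** A))\<^sup>2))
                 / ((spec_norm A)\<^sup>2 * (spec_norm B)\<^sup>2)
                 + (frob_norm (mp_inv B ** E ** mp_inv A))\<^sup>2)
               (((frob_norm E)\<^sup>2
                  - min ((spec_norm B)\<^sup>2 * (frob_norm (A ** mp_inv A ** E ** mp_inv B))\<^sup>2)
                        ((spec_norm A)\<^sup>2 * (frob_norm (mp_inv A ** E ** mp_inv B ** B))\<^sup>2))
                 / ((spec_norm A)\<^sup>2 * (spec_norm B)\<^sup>2)
                 + (frob_norm (mp_inv A ** E ** mp_inv B))\<^sup>2))"
proof -
  have swap: "A - B = - E" "mp_inv A - mp_inv B = - (mp_inv B - mp_inv A)"
    by (simp_all add: E_def)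
  show ?thesis
    using mp_inv_diff_lower_bound[of A B] mp_inv_diff_lower_bound[of B A]
      mp_inv_diff_lower_bound_equal_rank[of A B] mp_inv_diff_lower_bound_equal_rank[of B A]
    unfolding E_def[symmetric] swap
    by (simp only: matrix_mul_uminus_left matrix_mul_uminus_right frob_norm_uminus
        max.commute[of "(spec_norm B)^4"] mult.commute[of "(spec_norm B)\<^sup>2" "(spec_norm A)\<^sup>2"]
        max.bounded_iff simp_thms eq_commute[of "rank A"]) blast
qed

end
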